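(* Let $X$ be a compact Hausdorff space, $\mathcal C=C(X)$ with the supremum norm, $\alpha\colon X\to X$ continuous, $\delta f=f\circ\alpha$, and $A$ a transfer operator for $(\mathcal C,\delta)$. For $\varphi\in\mathcal C$ and $n\in\mathbb N$ let $\lambda(\varphi,A)=\lim_{k\to\infty}\frac1k\ln\|(A(e^{\varphi}\,\cdot\,))^k\mathbf 1\|$ and $\lambda(n\varphi,A^n)=\lim_{k\to\infty}\frac1k\ln\|(A^n(e^{n\varphi}\,\cdot\,))^k\mathbf 1\|$ be the logarithms of the spectral radii of the operators $f\mapsto A(e^\varphi f)$ and $f\mapsto A^n(e^{n\varphi}f)$ respectively. Then for all $\varphi\in\mathcal C$ and $n\in\mathbb N$, \[ n\lambda(\varphi,A)\le\lambda(n\varphi,A^n). \]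
   Context: A transfer operator for $(\mathcal C,\delta)$ is a positive linear operator $A\colon\mathcal C\to\mathcal C$ (mapping nonnegative functions to nonnegative functions) with $A((\delta f)g)=f\,Ag$ for all $f,g\in\mathcal C$. $\mathbf 1$ is the constant function $1$. *)

theory Defs
  imports "HOL-Analysis.Analysis"
begin

text \<open>The compact Hausdorff space X is the type 'a (class t2_space, with compact UNIV);
  C(X) is the set of continuous real functions on 'a, with the supremum norm.\<close>

definition supnorm :: "('a::topological_space \<Rightarrow> real) \<Rightarrow> real" where
  "supnorm f = (SUP x. \<bar>f x\<bar>)"

definition transfer_op :: "('a::topological_space \<Rightarrow> 'a) \<Rightarrow> (('a \<Rightarrow> real) \<Rightarrow> ('a \<Rightarrow> real)) \<Rightarrow> bool" where
  "transfer_op \<alpha> A \<longleftrightarrow>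
     (\<forall>f. continuous_on UNIV f \<longrightarrow> continuous_on UNIV (A f)) \<and>
     (\<forall>f g. continuous_on UNIV f \<longrightarrow> continuous_on UNIV g \<longrightarrow> A (\<lambda>x. f x + g x) = (\<lambda>x. A f x + A g x)) \<and>
     (\<forall>c f. continuous_on UNIV f \<longrightarrow> A (\<lambda>x. c * f x) = (\<lambda>x. c * A f x)) \<and>
     (\<forall>f. continuous_on UNIV f \<longrightarrow> (\<forall>x. f x \<ge> 0) \<longrightarrow> (\<forall>x. A f x \<ge> 0)) \<and>
     (\<forall>f g. continuous_on UNIV f \<longrightarrow> continuous_on UNIV g \<longrightarrow>
        A (\<lambda>x. f (\<alpha> x) * g x) = (\<lambda>x. f x * A g x))"

definition eln :: "real \<Rightarrow> ereal" where
  "eln x = (if x > 0 then ereal (ln x) else -\<infinity>)"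

definition wop :: "('a \<Rightarrow> real) \<Rightarrow> (('a \<Rightarrow> real) \<Rightarrow> ('a \<Rightarrow> real)) \<Rightarrow> ('a \<Rightarrow> real) \<Rightarrow> ('a \<Rightarrow> real)" where
  "wop \<phi> A f = A (\<lambda>x. exp (\<phi> x) * f x)"

definition lam :: "('a::topological_space \<Rightarrow> real) \<Rightarrow> (('a \<Rightarrow> real) \<Rightarrow> ('a \<Rightarrow> real)) \<Rightarrow> ereal" where
  "lam \<phi> A = lim (\<lambda>k. eln (supnorm ((wop \<phi> A ^^ k) (\<lambda>_. 1))) / ereal (real k))"

end

theory Submission
  imports Defs
begin

(* Write S_N phi = sum_{i<N} phi o alpha^i. The transfer identity gives
   (A(e^phi .))^N 1 = A^N (e^{S_N phi}), and likewise for A^n, alpha^n and n phi.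
   For N = n(k+1) split S_N phi into the n sums G_r over the indices congruent to r mod n;
   then e^{S_N phi} <= sum_r e^{n G_r}, and pulling the factors of each e^{n G_r} out of
   A^N = A^{n-r} A^{nk} A^r with the transfer identity bounds ||(A(e^phi .))^N 1|| by a constant
   times ||(A^n(e^{n phi} .))^k 1||. The norms ||B^k 1|| of a positive operator B are
   submultiplicative, so by Fekete's lemma lambda is the infimum of ln ||B^p 1|| / p, and the
   comparison of the growth rates follows. *)

abbreviation cts :: "('a::topological_space \<Rightarrow> 'b::topological_space) \<Rightarrow> bool" where
  "cts f \<equiv> continuous_on UNIV f"

definition pos_linear_op :: "(('a::topological_space \<Rightarrow> real) \<Rightarrow> ('a \<Rightarrow> real)) \<Rightarrow> bool" where
  "pos_linear_op B \<longleftrightarrow>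
     (\<forall>f. cts f \<longrightarrow> cts (B f)) \<and>
     (\<forall>f g. cts f \<longrightarrow> cts g \<longrightarrow> B (\<lambda>x. f x + g x) = (\<lambda>x. B f x + B g x)) \<and>
     (\<forall>c f. cts f \<longrightarrow> B (\<lambda>x. c * f x) = (\<lambda>x. c * B f x)) \<and>
     (\<forall>f. cts f \<longrightarrow> (\<forall>x. f x \<ge> 0) \<longrightarrow> (\<forall>x. B f x \<ge> 0))"

lemma transfer_op_imp_pos_linear_op: "transfer_op \<alpha> A \<Longrightarrow> pos_linear_op A"
  unfolding transfer_op_def pos_linear_op_def by blast

lemma pos_linear_opD:
  assumes "pos_linear_op B"
  shows "cts f \<Longrightarrow> cts (B f)"
    and "cts f \<Longrightarrow> cts g \<Longrightarrow> B (\<lambda>x. f x + g x) = (\<lambda>x. B f x + B g x)"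
    and "cts f \<Longrightarrow> B (\<lambda>x. c * f x) = (\<lambda>x. c * B f x)"
    and "cts f \<Longrightarrow> (\<And>x. f x \<ge> 0) \<Longrightarrow> B f x \<ge> 0"
  using assms unfolding pos_linear_op_def by blast+

lemma pos_linear_op_zero: "pos_linear_op B \<Longrightarrow> B (\<lambda>x. 0) = (\<lambda>x. 0)"
  using pos_linear_opD(3)[of B "\<lambda>x. 0" 0] by simp

lemma pos_linear_op_diff:
  assumes B: "pos_linear_op B" and f: "cts f" and g: "cts g"
  shows "B (\<lambda>x. f x - g x) = (\<lambda>x. B f x - B g x)"
proof -
  have "cts (\<lambda>x. (-1) * g x)" by (intro continuous_intros g)
  then have "B (\<lambda>x. f x + (-1) * g x) = (\<lambda>x. B f x + B (\<lambda>x. (-1) * g x) x)"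
    by (rule pos_linear_opD(2)[OF B f])
  then show ?thesis using pos_linear_opD(3)[OF B g, of "-1"] by simp
qed

lemma pos_linear_op_mono:
  assumes B: "pos_linear_op B" and f: "cts f" and g: "cts g" and le: "\<And>x. f x \<le> g x"
  shows "B f x \<le> B g x"
proof -
  have "cts (\<lambda>x. g x - f x)" by (intro continuous_intros f g)
  then have "0 \<le> B (\<lambda>x. g x - f x) x" using pos_linear_opD(4)[OF B] le by simp
  then show ?thesis using pos_linear_op_diff[OF B g f] by simp
qed

lemma pos_linear_op_le_scaled:
  assumes B: "pos_linear_op B" and f: "cts f" and g: "cts g" and le: "\<And>x. f x \<le> c * g x"
  shows "B f x \<le> c * B g x"
proof -
  have "cts (\<lambda>x. c * g x)" by (intro continuous_intros g)
  from pos_linear_op_mono[OF B f this le] show ?thesis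
    using pos_linear_opD(3)[OF B g, of c] by simp
qed

lemma pos_linear_op_sum:
  assumes B: "pos_linear_op B" and "finite I" and f: "\<And>r. cts (f r)"
  shows "B (\<lambda>x. \<Sum>r\<in>I. f r x) = (\<lambda>x. \<Sum>r\<in>I. B (f r) x)"
  using \<open>finite I\<close>
proof (induction I rule: finite_induct)
  case empty
  then show ?case using pos_linear_op_zero[OF B] by simp
next
  case (insert a I)
  have "cts (\<lambda>x. \<Sum>r\<in>I. f r x)" by (intro continuous_intros f)
  then have "B (\<lambda>x. f a x + (\<Sum>r\<in>I. f r x)) = (\<lambda>x. B (f a) x + B (\<lambda>x. \<Sum>r\<in>I. f r x) x)"
    by (rule pos_linear_opD(2)[OF B f])
  then show ?case using insert by simp
qed

lemma pos_linear_op_funpow: "pos_linear_op B \<Longrightarrow> pos_linear_op (B ^^ m)"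
proof (induction m)
  case 0 then show ?case unfolding pos_linear_op_def by simp
next
  case (Suc m) then show ?case unfolding pos_linear_op_def by (simp add: pos_linear_opD)
qed

lemma pos_linear_op_wop:
  assumes B: "pos_linear_op B" and \<psi>: "cts \<psi>"
  shows "pos_linear_op (wop \<psi> B)"
proof -
  have e: "cts (\<lambda>x. exp (\<psi> x) * f x)" if "cts f" for f by (intro continuous_intros \<psi> that)
  show ?thesis unfolding pos_linear_op_def wop_def
  proof (intro conjI allI impI)
    fix f g :: "'a \<Rightarrow> real" assume "cts f" "cts g"
    then show "B (\<lambda>x. exp (\<psi> x) * (f x + g x))
        = (\<lambda>x. B (\<lambda>x. exp (\<psi> x) * f x) x + B (\<lambda>x. exp (\<psi> x) * g x) x)"
      using pos_linear_opD(2)[OF B e e] by (simp add: distrib_left)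
  next
    fix c :: real and f :: "'a \<Rightarrow> real" assume "cts f"
    then show "B (\<lambda>x. exp (\<psi> x) * (c * f x)) = (\<lambda>x. c * B (\<lambda>x. exp (\<psi> x) * f x) x)"
      using pos_linear_opD(3)[OF B e] by (simp add: mult.left_commute)
  next
    fix f :: "'a \<Rightarrow> real" and x assume "cts f" "\<forall>x. 0 \<le> f x"
    then show "0 \<le> B (\<lambda>x. exp (\<psi> x) * f x) x" by (intro pos_linear_opD(4)[OF B e]) auto
  qed (intro pos_linear_opD(1)[OF B e])
qed

lemma continuous_on_funpow: "cts (\<alpha>::'a::topological_space \<Rightarrow> 'a) \<Longrightarrow> cts (\<alpha> ^^ m)"
  by (induction m) (auto intro: continuous_on_compose2 simp: continuous_on_id)

lemma transfer_op_funpow: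
  assumes T: "transfer_op \<alpha> A" and \<alpha>: "cts \<alpha>"
  shows "transfer_op (\<alpha> ^^ m) (A ^^ m)"
proof (induction m)
  case 0
  then show ?case unfolding transfer_op_def by simp
next
  case (Suc m)
  have A: "pos_linear_op A" by (rule transfer_op_imp_pos_linear_op[OF T])
  have Am: "pos_linear_op (A ^^ m)" and ASm: "pos_linear_op (A ^^ Suc m)"
    by (rule pos_linear_op_funpow[OF A])+
  have "(A ^^ Suc m) (\<lambda>x. f ((\<alpha> ^^ Suc m) x) * g x) = (\<lambda>x. f x * (A ^^ Suc m) g x)"
    if f: "cts f" and g: "cts g" for f g
  proof -
    have "cts (\<lambda>x. f (\<alpha> x))" using continuous_on_compose2[OF f \<alpha>] by simp
    then have "(A ^^ m) (\<lambda>x. f (\<alpha> ((\<alpha> ^^ m) x)) * g x) = (\<lambda>x. f (\<alpha> x) * (A ^^ m) g x)"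
      using Suc.IH g unfolding transfer_op_def by blast
    moreover have "A (\<lambda>x. f (\<alpha> x) * (A ^^ m) g x) = (\<lambda>x. f x * A ((A ^^ m) g) x)"
      using T f pos_linear_opD(1)[OF Am g] unfolding transfer_op_def by blast
    ultimately show ?thesis by (simp add: funpow_swap1)
  qed
  with ASm show ?case unfolding transfer_op_def pos_linear_op_def by blast
qed

lemma transfer_op_funpowD:
  assumes "transfer_op \<alpha> A" "cts \<alpha>" "cts f" "cts g"
  shows "(A ^^ m) (\<lambda>x. f ((\<alpha> ^^ m) x) * g x) = (\<lambda>x. f x * (A ^^ m) g x)"
  using transfer_op_funpow[OF assms(1,2), of m] assms(3,4) unfolding transfer_op_def by blast

definition birkhoff_sum :: "('a \<Rightarrow> 'a) \<Rightarrow> ('a \<Rightarrow> real) \<Rightarrow> nat \<Rightarrow> 'a \<Rightarrow> real" where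
  "birkhoff_sum \<alpha> \<psi> k x = (\<Sum>j<k. \<psi> ((\<alpha> ^^ j) x))"

lemma continuous_on_birkhoff_sum:
  "cts (\<alpha>::'a::topological_space \<Rightarrow> 'a) \<Longrightarrow> cts \<psi> \<Longrightarrow> cts (birkhoff_sum \<alpha> \<psi> k)"
proof -
  assume \<alpha>: "cts \<alpha>" and \<psi>: "cts \<psi>"
  have "cts (\<lambda>x. \<psi> ((\<alpha> ^^ j) x))" for j
    using continuous_on_compose2[OF \<psi> continuous_on_funpow[OF \<alpha>]] by simp
  then show ?thesis unfolding birkhoff_sum_def by (intro continuous_intros)
qed

lemma birkhoff_sum_mult:
  "birkhoff_sum \<alpha> \<psi> (n * k) x = (\<Sum>r<n. birkhoff_sum (\<alpha> ^^ n) \<psi> k ((\<alpha> ^^ r) x))"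
proof (induction k)
  case 0 then show ?case by (simp add: birkhoff_sum_def)
next
  case (Suc k)
  have "(\<lambda>r. n * k + r) ` {..<n} = {n * k..<n * Suc k}"
    using image_add_atLeastLessThan[of "n * k" 0 n] by (simp add: lessThan_atLeast0 add.commute)
  then have index_split: "{..<n * Suc k} = {..<n * k} \<union> (\<lambda>r. n * k + r) ` {..<n}"
    by (simp add: ivl_disj_un_one)
  then have "birkhoff_sum \<alpha> \<psi> (n * Suc k) x
      = birkhoff_sum \<alpha> \<psi> (n * k) x + (\<Sum>r<n. \<psi> ((\<alpha> ^^ (n * k + r)) x))"
    unfolding birkhoff_sum_def index_split by (subst sum.union_disjoint) (auto simp: sum.reindex)
  moreover have "((\<alpha> ^^ n) ^^ k) ((\<alpha> ^^ r) x) = (\<alpha> ^^ (n * k + r)) x" for r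
    by (simp add: funpow_mult funpow_add)
  ultimately show ?case
    using Suc.IH by (simp add: birkhoff_sum_def sum.distrib)
qed

lemma wop_funpow_one:
  assumes T: "transfer_op \<alpha> A" and \<alpha>: "cts \<alpha>" and \<psi>: "cts \<psi>"
  shows "(wop \<psi> A ^^ k) (\<lambda>_. 1) = (A ^^ k) (\<lambda>x. exp (birkhoff_sum \<alpha> \<psi> k x))"
proof (induction k)
  case 0 then show ?case by (simp add: birkhoff_sum_def)
next
  case (Suc k)
  have "cts (\<lambda>x. exp (\<psi> x))" "cts (\<lambda>x. exp (birkhoff_sum \<alpha> \<psi> k x))"
    by (intro continuous_intros \<psi> continuous_on_birkhoff_sum \<alpha>)+
  from transfer_op_funpowD[OF T \<alpha> this, of k]
  have "(\<lambda>x. exp (\<psi> x) * (A ^^ k) (\<lambda>x. exp (birkhoff_sum \<alpha> \<psi> k x)) x)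
      = (A ^^ k) (\<lambda>x. exp (birkhoff_sum \<alpha> \<psi> (Suc k) x))"
    by (simp add: birkhoff_sum_def exp_add[symmetric] add.commute)
  then show ?case using Suc.IH by (simp add: wop_def)
qed

lemma bdd_above_abs_range:
  assumes "compact (UNIV::'a::topological_space set)" "cts (f::'a \<Rightarrow> real)"
  shows "bdd_above (range (\<lambda>x. \<bar>f x\<bar>))"
proof -
  have "bounded (range f)" by (intro compact_imp_bounded compact_continuous_image assms)
  then obtain c where "\<forall>y\<in>range f. \<bar>y\<bar> \<le> c" unfolding bounded_real by blast
  then show ?thesis by (auto intro: bdd_aboveI)
qed

lemma abs_le_supnorm:
  assumes "compact (UNIV::'a::topological_space set)" "cts (f::'a \<Rightarrow> real)"
  shows "\<bar>f x\<bar> \<le> supnorm f"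
  unfolding supnorm_def by (rule cSUP_upper[OF _ bdd_above_abs_range[OF assms]]) simp

lemma supnorm_le: "(\<And>x. \<bar>f x\<bar> \<le> c) \<Longrightarrow> supnorm f \<le> c"
  unfolding supnorm_def by (rule cSUP_least) auto

lemma supnorm_nonneg:
  assumes "compact (UNIV::'a::topological_space set)" "cts (f::'a \<Rightarrow> real)"
  shows "0 \<le> supnorm f"
  using abs_le_supnorm[OF assms, of undefined] by linarith

lemma supnorm_iterate_nonneg:
  assumes "compact (UNIV::'a::topological_space set)" "pos_linear_op (B :: ('a \<Rightarrow> real) \<Rightarrow> _)"
  shows "0 \<le> supnorm ((B ^^ m) (\<lambda>_. 1))"
  by (intro supnorm_nonneg assms pos_linear_opD(1)[OF pos_linear_op_funpow] continuous_intros)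

lemma supnorm_iterate_add_le:
  assumes C: "compact (UNIV::'a::topological_space set)" and B: "pos_linear_op (B :: ('a \<Rightarrow> real) \<Rightarrow> _)"
  shows "supnorm ((B ^^ (m + l)) (\<lambda>_. 1)) \<le> supnorm ((B ^^ m) (\<lambda>_. 1)) * supnorm ((B ^^ l) (\<lambda>_. 1))"
proof (rule supnorm_le)
  fix x
  let ?Q = "\<lambda>m. (B ^^ m) (\<lambda>_. 1)"
  have Bm: "pos_linear_op (B ^^ m)" for m by (rule pos_linear_op_funpow[OF B])
  have cQ: "cts (?Q m)" and Q0: "0 \<le> ?Q m x" for m x
    by (intro pos_linear_opD[OF Bm] continuous_intros; simp)+
  have "?Q (m + l) x = (B ^^ m) (?Q l) x" by (simp add: funpow_add)
  also have "\<dots> \<le> supnorm (?Q l) * ?Q m x"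
    using abs_le_supnorm[OF C cQ] by (intro pos_linear_op_le_scaled[OF Bm cQ]) (auto dest: abs_le_D1)
  also have "\<dots> \<le> supnorm (?Q l) * supnorm (?Q m)"
    using abs_le_supnorm[OF C cQ, of m x] supnorm_nonneg[OF C cQ, of l] by (intro mult_left_mono) auto
  finally show "\<bar>?Q (m + l) x\<bar> \<le> supnorm (?Q m) * supnorm (?Q l)"
    using Q0[of "m + l" x] by (simp add: mult.commute)
qed

lemma transfer_op_funpow_factor_bound:
  fixes \<alpha> :: "'a::topological_space \<Rightarrow> 'a"
  assumes C: "compact (UNIV::'a set)" and \<alpha>: "cts \<alpha>" and T: "transfer_op \<alpha> A"
    and u: "cts u" "\<And>x. 0 \<le> u x" and v: "cts v" "\<And>x. 0 \<le> v x"
  shows "(A ^^ (s + m + r)) (\<lambda>x. u ((\<alpha> ^^ (m + r)) x) * v ((\<alpha> ^^ r) x)) x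
    \<le> supnorm ((A ^^ r) (\<lambda>_. 1)) * supnorm ((A ^^ m) v) * supnorm ((A ^^ s) u)"
proof -
  let ?R = "(A ^^ r) (\<lambda>_. 1)" and ?K = "supnorm ((A ^^ r) (\<lambda>_. 1)) * supnorm ((A ^^ m) v)"
  \<comment> \<open>The transfer identity moves \<open>v\<close> out of \<open>A ^^ r\<close> and then \<open>u\<close> out of \<open>A ^^ m\<close>.\<close>
  have P: "pos_linear_op (A ^^ j)" for j
    by (rule pos_linear_op_funpow[OF transfer_op_imp_pos_linear_op[OF T]])
  have cR: "cts ?R" by (intro pos_linear_opD[OF P] continuous_intros)
  have cu\<alpha>: "cts (\<lambda>x. u ((\<alpha> ^^ m) x))"
    by (rule continuous_on_compose2[OF u(1) continuous_on_funpow[OF \<alpha>]]) simp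
  have cH: "cts (\<lambda>x. v x * ?R x)" by (intro continuous_intros v cR)
  have "(A ^^ r) (\<lambda>x. u ((\<alpha> ^^ (m + r)) x) * v ((\<alpha> ^^ r) x))
      = (\<lambda>x. u ((\<alpha> ^^ m) x) * v x * ?R x)"
    using transfer_op_funpowD[OF T \<alpha> continuous_on_mult[OF cu\<alpha> v(1)], of "\<lambda>_. 1" r]
    by (simp add: funpow_add)
  moreover have "(A ^^ m) (\<lambda>x. u ((\<alpha> ^^ m) x) * v x * ?R x)
      = (\<lambda>x. u x * (A ^^ m) (\<lambda>x. v x * ?R x) x)"
    using transfer_op_funpowD[OF T \<alpha> u(1) cH, of m] by (simp add: mult.assoc)
  moreover have H: "(A ^^ m) (\<lambda>x. v x * ?R x) y \<le> ?K" for y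
  proof -
    have "(A ^^ m) (\<lambda>x. v x * ?R x) y \<le> supnorm ?R * (A ^^ m) v y"
      using abs_le_supnorm[OF C cR] v(2)
      by (intro pos_linear_op_le_scaled[OF P cH v(1)])
        (auto simp: mult.commute intro: mult_left_mono order_trans[OF abs_ge_self])
    also have "\<dots> \<le> ?K"
      using abs_le_supnorm[OF C pos_linear_opD(1)[OF P[of m] v(1)], of y] supnorm_nonneg[OF C cR]
      by (intro mult_left_mono) auto
    finally show ?thesis .
  qed
  ultimately have "(A ^^ (s + m + r)) (\<lambda>x. u ((\<alpha> ^^ (m + r)) x) * v ((\<alpha> ^^ r) x)) x
      = (A ^^ s) (\<lambda>y. u y * (A ^^ m) (\<lambda>x. v x * ?R x) y) x"
    by (simp add: funpow_add)
  also have "\<dots> \<le> ?K * (A ^^ s) u x"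
    using H u(2) by (intro pos_linear_op_le_scaled[OF P _ u(1)])
      (auto intro!: continuous_intros u(1) pos_linear_opD(1)[OF P] cH simp: mult.commute intro: mult_left_mono)
  also have "\<dots> \<le> ?K * supnorm ((A ^^ s) u)"
    using abs_le_supnorm[OF C pos_linear_opD(1)[OF P[of s] u(1)], of x] supnorm_nonneg[OF C cR]
      supnorm_nonneg[OF C pos_linear_opD(1)[OF P[of m] v(1)]]
    by (intro mult_left_mono) auto
  finally show ?thesis .
qed

lemma exp_sum_le_sum_exp_card:
  assumes "finite I" "I \<noteq> {}"
  shows "exp (\<Sum>r\<in>I. y r) \<le> (\<Sum>r\<in>I. exp (real (card I) * y r))"
proof -
  have "Max (y ` I) \<in> y ` I" using assms by (intro Max_in) auto
  then obtain r0 where r0: "r0 \<in> I" "y r0 = Max (y ` I)" by (metis imageE)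
  have "(\<Sum>r\<in>I. y r) \<le> real (card I) * y r0"
    using r0 assms by (intro sum_bounded_above) simp
  then have "exp (\<Sum>r\<in>I. y r) \<le> exp (real (card I) * y r0)" by simp
  also have "\<dots> \<le> (\<Sum>r\<in>I. exp (real (card I) * y r))"
    by (rule member_le_sum[OF r0(1)]) (use assms in auto)
  finally show ?thesis .
qed

lemma weighted_iterate_supnorm_le:
  fixes \<alpha> :: "'a::topological_space \<Rightarrow> 'a"
  assumes C: "compact (UNIV :: 'a set)" and \<alpha>: "cts \<alpha>" and T: "transfer_op \<alpha> A"
    and \<phi>: "cts \<phi>" and n: "n \<ge> 1"
  shows "supnorm ((wop \<phi> A ^^ (n * Suc k)) (\<lambda>_. 1))
     \<le> (\<Sum>r<n. supnorm ((A ^^ r) (\<lambda>_. 1)) * supnorm ((A ^^ (n - r)) (\<lambda>y. exp (real n * \<phi> y))))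
        * supnorm ((wop (\<lambda>x. real n * \<phi> x) (A ^^ n) ^^ k) (\<lambda>_. 1))"
    (is "_ \<le> (\<Sum>r<n. ?c r * ?c' r) * supnorm ?P")
proof -
  define u where "u = (\<lambda>y. exp (real n * \<phi> y))"
  define v where "v = (\<lambda>x. exp (birkhoff_sum (\<alpha> ^^ n) (\<lambda>x. real n * \<phi> x) k x))"
  \<comment> \<open>\<open>G r\<close> collects the terms of \<open>birkhoff_sum \<alpha> \<phi> (n * Suc k)\<close> with index \<open>\<equiv> r mod n\<close>.\<close>
  define G where "G r x = birkhoff_sum (\<alpha> ^^ n) \<phi> (Suc k) ((\<alpha> ^^ r) x)" for r x
  have P: "pos_linear_op (A ^^ j)" for j
    by (rule pos_linear_op_funpow[OF transfer_op_imp_pos_linear_op[OF T]])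
  have \<alpha>n: "cts (\<alpha> ^^ j)" for j by (rule continuous_on_funpow[OF \<alpha>])
  have cn\<phi>: "cts (\<lambda>x. real n * \<phi> x)" by (intro continuous_intros \<phi>)
  have cu: "cts u" and cv: "cts v" unfolding u_def v_def
    by (intro continuous_intros \<phi> continuous_on_birkhoff_sum \<alpha>n cn\<phi>)+
  have cG: "cts (G r)" for r
    using continuous_on_compose2[OF continuous_on_birkhoff_sum[OF \<alpha>n \<phi>] \<alpha>n]
    unfolding G_def by simp
  have P_eq: "?P = (A ^^ (n * k)) v"
    using wop_funpow_one[OF transfer_op_funpow[OF T \<alpha>] \<alpha>n cn\<phi>] by (simp add: v_def funpow_mult)
  have G_split: "exp (real n * G r x) = u ((\<alpha> ^^ (n * k + r)) x) * v ((\<alpha> ^^ r) x)" for r x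
  proof -
    have "((\<alpha> ^^ n) ^^ k) ((\<alpha> ^^ r) x) = (\<alpha> ^^ (n * k + r)) x"
      by (simp add: funpow_mult funpow_add)
    then show ?thesis
      by (simp add: G_def u_def v_def birkhoff_sum_def sum_distrib_left distrib_left exp_add)
  qed
  have term_le: "(A ^^ (n * Suc k)) (\<lambda>x. exp (real n * G r x)) x \<le> ?c r * supnorm ?P * ?c' r"
    if "r < n" for r x
  proof -
    have "n * Suc k = (n - r) + n * k + r" using that by simp
    then show ?thesis
      using transfer_op_funpow_factor_bound[OF C \<alpha> T cu _ cv, of "n - r" "n * k" r x]
      unfolding G_split P_eq u_def v_def by simp
  qed
  have "(wop \<phi> A ^^ (n * Suc k)) (\<lambda>_. 1) = (A ^^ (n * Suc k)) (\<lambda>x. exp (\<Sum>r<n. G r x))"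
    unfolding wop_funpow_one[OF T \<alpha> \<phi>] G_def birkhoff_sum_mult ..
  moreover have "\<bar>(A ^^ (n * Suc k)) (\<lambda>x. exp (\<Sum>r<n. G r x)) x\<bar>
      \<le> (\<Sum>r<n. ?c r * ?c' r) * supnorm ?P" for x
  proof -
    have c\<Sigma>: "cts (\<lambda>x. exp (\<Sum>r<n. G r x))" by (intro continuous_intros cG)
    have exp_le: "exp (\<Sum>r<n. G r y) \<le> (\<Sum>r<n. exp (real n * G r y))" for y
      using exp_sum_le_sum_exp_card[of "{..<n}" "\<lambda>r. G r y"] n by (simp add: lessThan_empty_iff)
    have nonneg: "0 \<le> (A ^^ (n * Suc k)) (\<lambda>x. exp (\<Sum>r<n. G r x)) x"
      by (rule pos_linear_opD(4)[OF P c\<Sigma>]) simp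
    have "(A ^^ (n * Suc k)) (\<lambda>x. exp (\<Sum>r<n. G r x)) x
        \<le> (A ^^ (n * Suc k)) (\<lambda>x. \<Sum>r<n. exp (real n * G r x)) x"
      using exp_le by (intro pos_linear_op_mono[OF P c\<Sigma>]) (auto intro!: continuous_intros cG)
    also have "\<dots> = (\<Sum>r<n. (A ^^ (n * Suc k)) (\<lambda>x. exp (real n * G r x)) x)"
      by (subst pos_linear_op_sum[OF P]) (auto intro!: continuous_intros cG)
    also have "\<dots> \<le> (\<Sum>r<n. ?c r * supnorm ?P * ?c' r)" by (intro sum_mono term_le) simp
    also have "\<dots> = (\<Sum>r<n. ?c r * ?c' r) * supnorm ?P"
      unfolding sum_distrib_right by (simp add: mult_ac)
    finally show ?thesis using nonneg by simp
  qed
  ultimately show ?thesis by (simp add: supnorm_le)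
qed

lemma subadditive_mult_add_le:
  fixes a :: "nat \<Rightarrow> real"
  assumes sub: "\<And>m l. a (m + l) \<le> a m + a l"
  shows "a (q * p + s) \<le> real q * a p + a s"
proof (induction q)
  case 0 then show ?case by simp
next
  case (Suc q)
  have "a (Suc q * p + s) = a (p + (q * p + s))" by (simp add: algebra_simps)
  also have "\<dots> \<le> a p + a (q * p + s)" by (rule sub)
  finally show ?case using Suc by (simp add: algebra_simps)
qed

lemma subadditive_mult_le:
  fixes a :: "nat \<Rightarrow> real"
  assumes sub: "\<And>m l. a (m + l) \<le> a m + a l" and j: "j \<ge> 1"
  shows "a (j * p) \<le> real j * a p"
  using subadditive_mult_add_le[OF sub, of "j - 1" p p] j
  by (simp add: algebra_simps of_nat_diff mult_eq_if split: if_splits)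

lemma subadditive_quotient_le:
  fixes a :: "nat \<Rightarrow> real"
  assumes sub: "\<And>m l. a (m + l) \<le> a m + a l" and p: "p \<ge> 1" and m: "m \<ge> 1"
  shows "a m / real m \<le> a p / real p + ((\<Sum>s<p. \<bar>a s\<bar>) + \<bar>a p\<bar>) / real m"
proof -
  define q where "q = m div p"
  define s where "s = m mod p"
  have ms: "m = q * p + s" unfolding q_def s_def by simp
  have sp: "s < p" unfolding s_def using p by simp
  have pp: "real p > 0" using p by simp
  have "real q * real p \<le> real m" "real m < real q * real p + real p"
    using ms sp by (simp_all flip: of_nat_mult of_nat_add)
  then have "\<bar>real q - real m / real p\<bar> \<le> 1" using pp by (simp add: field_simps abs_le_iff)
  then have "(real q - real m / real p) * a p \<le> \<bar>a p\<bar>"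
    using abs_ge_self[of "(real q - real m / real p) * a p"]
      mult_left_le_one_le[of "\<bar>a p\<bar>" "\<bar>real q - real m / real p\<bar>"]
    by (simp add: abs_mult)
  moreover have "a s \<le> (\<Sum>s<p. \<bar>a s\<bar>)"
    using member_le_sum[of s "{..<p}" "\<lambda>s. \<bar>a s\<bar>"] sp by auto
  ultimately have "a m \<le> real m / real p * a p + \<bar>a p\<bar> + (\<Sum>s<p. \<bar>a s\<bar>)"
    using subadditive_mult_add_le[OF sub, of q p s] ms by (simp add: algebra_simps)
  then show ?thesis using m pp by (simp add: field_simps)
qed

lemma subadditive_quotient_tendsto_INF:
  fixes a :: "nat \<Rightarrow> real"
  assumes sub: "\<And>m l. a (m + l) \<le> a m + a l"
  shows "(\<lambda>m. ereal (a m / real m)) \<longlonglongrightarrow> (INF p\<in>{1..}. ereal (a p / real p))"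
proof -
  define L where "L = (INF p\<in>{1..}. ereal (a p / real p))"
  have "Limsup sequentially (\<lambda>m. ereal (a m / real m)) \<le> ereal (a p / real p)" if p: "p \<ge> 1" for p
  proof -
    define K where "K = (\<Sum>s<p. \<bar>a s\<bar>) + \<bar>a p\<bar>"
    have "(\<lambda>m. ereal (a p / real p + K / real m)) \<longlonglongrightarrow> ereal (a p / real p + 0)"
      unfolding lim_ereal by (intro tendsto_intros lim_const_over_n)
    then have "Limsup sequentially (\<lambda>m. ereal (a p / real p + K / real m)) = ereal (a p / real p)"
      by (intro lim_imp_Limsup) simp_all
    moreover have "Limsup sequentially (\<lambda>m. ereal (a m / real m))
        \<le> Limsup sequentially (\<lambda>m. ereal (a p / real p + K / real m))"
      using subadditive_quotient_le[OF sub p] unfolding K_def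
      by (intro Limsup_mono) (auto simp: eventually_sequentially)
    ultimately show ?thesis by simp
  qed
  then have "Limsup sequentially (\<lambda>m. ereal (a m / real m)) \<le> L"
    unfolding L_def by (auto intro: INF_greatest)
  moreover have "L \<le> Liminf sequentially (\<lambda>m. ereal (a m / real m))"
    unfolding L_def by (rule Liminf_bounded) (auto simp: eventually_sequentially intro: INF_lower)
  ultimately have "Liminf sequentially (\<lambda>m. ereal (a m / real m)) = L"
    "Limsup sequentially (\<lambda>m. ereal (a m / real m)) = L"
    using Liminf_le_Limsup[of sequentially "\<lambda>m. ereal (a m / real m)"] by auto
  then show ?thesis unfolding L_def[symmetric] by (simp add: tendsto_iff_Liminf_eq_Limsup)
qed

lemma tendsto_affine_quotient:
  assumes p: "p \<ge> (1::nat)"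
  shows "(\<lambda>j. (c + real j * b) / (real j * real p + 1)) \<longlonglongrightarrow> b / real p"
proof -
  have "(\<lambda>j. (c / real j + b) / (real p + 1 / real j)) \<longlonglongrightarrow> (0 + b) / (real p + 0)"
    using p by (intro tendsto_intros) auto
  moreover have "(c / real j + b) / (real p + 1 / real j) = (c + real j * b) / (real j * real p + 1)"
    if "j \<ge> 1" for j
  proof -
    have "real j > 0" using that by simp
    then have "c / real j + b = (c + real j * b) / real j"
      and "real p + 1 / real j = (real j * real p + 1) / real j"
      by (simp_all add: field_simps)
    with \<open>real j > 0\<close> show ?thesis by simp
  qed
  then have "\<forall>\<^sub>F j in sequentially.
      (c / real j + b) / (real p + 1 / real j) = (c + real j * b) / (real j * real p + 1)"
    by (auto simp: eventually_sequentially)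
  ultimately show ?thesis by (simp add: Lim_transform_eventually)
qed

lemma subadditive_rate_compare:
  fixes a b :: "nat \<Rightarrow> real"
  assumes sub_a: "\<And>m l. a (m + l) \<le> a m + a l" and sub_b: "\<And>m l. b (m + l) \<le> b m + b l"
    and n: "n \<ge> 1" and dom: "\<And>k. a (n * Suc k) \<le> c + b k"
  shows "ereal (real n) * (INF p\<in>{1..}. ereal (a p / real p))
    \<le> (INF p\<in>{1..}. ereal (b p / real p))"
proof (rule INF_greatest)
  fix p :: nat assume "p \<in> {1..}"
  then have p: "p \<ge> 1" by simp
  have lim: "(\<lambda>j. ereal ((c + real j * b p) / (real j * real p + 1))) \<longlonglongrightarrow> ereal (b p / real p)"
    using tendsto_affine_quotient[OF p] unfolding lim_ereal .
  show "ereal (real n) * (INF p\<in>{1..}. ereal (a p / real p)) \<le> ereal (b p / real p)"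
  proof (rule LIMSEQ_le_const[OF lim], intro exI allI impI)
    fix j :: nat assume j: "1 \<le> j"
    define N where "N = n * Suc (j * p)"
    have "ereal (real n) * (INF p\<in>{1..}. ereal (a p / real p))
        \<le> ereal (real n) * ereal (a N / real N)"
      using n by (intro ereal_mult_left_mono INF_lower) (auto simp: N_def)
    also have "\<dots> = ereal (a N / (real j * real p + 1))"
    proof -
      have "real N = real n * (real j * real p + 1)" by (simp add: N_def algebra_simps)
      then show ?thesis using n by simp
    qed
    also have "\<dots> \<le> ereal ((c + real j * b p) / (real j * real p + 1))"
    proof -
      have "a N \<le> c + real j * b p"
        using dom[of "j * p"] subadditive_mult_le[OF sub_b j, of p] unfolding N_def by linarith
      then show ?thesis by (simp add: divide_right_mono)
    qed
    finally show "ereal (real n) * (INF p\<in>{1..}. ereal (a p / real p))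
        \<le> ereal ((c + real j * b p) / (real j * real p + 1))" .
  qed
qed

definition log_growth :: "(nat \<Rightarrow> real) \<Rightarrow> ereal" where
  "log_growth q = lim (\<lambda>k. eln (q k) / ereal (real k))"

lemma ln_submultiplicative:
  fixes q :: "nat \<Rightarrow> real"
  assumes pos: "\<And>m. 0 < q m" and sub: "\<And>m l. q (m + l) \<le> q m * q l"
  shows "ln (q (m + l)) \<le> ln (q m) + ln (q l)"
  using ln_mono[OF sub pos] ln_mult_pos[OF pos pos] by simp

lemma log_growth_eq_INF:
  assumes pos: "\<And>m. 0 < q m" and sub: "\<And>m l. q (m + l) \<le> q m * q l"
  shows "log_growth q = (INF p\<in>{1..}. ereal (ln (q p) / real p))"
  unfolding log_growth_def
proof (rule limI)
  have "\<forall>\<^sub>F k in sequentially. ereal (ln (q k) / real k) = eln (q k) / ereal (real k)"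
    using pos by (auto simp: eventually_sequentially eln_def intro!: exI[of _ 1])
  then show "(\<lambda>k. eln (q k) / ereal (real k)) \<longlonglongrightarrow> (INF p\<in>{1..}. ereal (ln (q p) / real p))"
    using subadditive_quotient_tendsto_INF[OF ln_submultiplicative[OF pos sub]]
    by (rule Lim_transform_eventually[rotated])
qed

lemma log_growth_eq_minf:
  assumes nonneg: "\<And>m. 0 \<le> q m" and sub: "\<And>m l. q (m + l) \<le> q m * q l" and zero: "q m0 = 0"
  shows "log_growth q = -\<infinity>"
  unfolding log_growth_def
proof (rule limI, rule tendsto_eventually)
  have "q k = 0" if "k \<ge> m0" for k
    using sub[of m0 "k - m0"] nonneg[of k] zero that by simp
  then show "\<forall>\<^sub>F k in sequentially. eln (q k) / ereal (real k) = -\<infinity>"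
    by (auto simp: eventually_sequentially eln_def intro!: exI[of _ "Suc m0"])
qed

lemma log_growth_compare:
  assumes nonneg1: "\<And>m. 0 \<le> q1 m" and sub1: "\<And>m l. q1 (m + l) \<le> q1 m * q1 l"
    and nonneg2: "\<And>m. 0 \<le> q2 m" and sub2: "\<And>m l. q2 (m + l) \<le> q2 m * q2 l"
    and n: "n \<ge> 1" and dom: "\<And>k. q1 (n * Suc k) \<le> C * q2 k"
  shows "ereal (real n) * log_growth q1 \<le> log_growth q2"
proof (cases "\<exists>m. q1 m = 0")
  case True
  then obtain m0 where "q1 m0 = 0" by blast
  then show ?thesis using log_growth_eq_minf[OF nonneg1 sub1] n by simp
next
  case False
  then have pos1: "0 < q1 m" for m using nonneg1 by (simp add: order_less_le)
  have Cq2: "0 < C * q2 k" for k using dom[of k] pos1[of "n * Suc k"] by linarith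
  have pos2: "0 < q2 k" for k using Cq2[of k] nonneg2[of k] by (cases "q2 k = 0") auto
  have C: "0 < C" using Cq2[of 0] pos2[of 0] by (simp add: zero_less_mult_iff)
  have "ln (q1 (n * Suc k)) \<le> ln C + ln (q2 k)" for k
    using ln_mono[OF dom pos1] ln_mult_pos[OF C pos2] by simp
  then show ?thesis unfolding log_growth_eq_INF[OF pos1 sub1] log_growth_eq_INF[OF pos2 sub2]
    by (rule subadditive_rate_compare[OF ln_submultiplicative[OF pos1 sub1]
          ln_submultiplicative[OF pos2 sub2] n])
qed

theorem lemma1p12:
  fixes \<alpha> :: "'a::t2_space \<Rightarrow> 'a"
    and A :: "('a \<Rightarrow> real) \<Rightarrow> ('a \<Rightarrow> real)"
    and \<phi> :: "'a \<Rightarrow> real"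
    and n :: nat
  assumes "compact (UNIV :: 'a set)"
    and "continuous_on UNIV \<alpha>"
    and "transfer_op \<alpha> A"
    and "continuous_on UNIV \<phi>"
    and "n \<ge> 1"
  shows "ereal (real n) * lam \<phi> A \<le> lam (\<lambda>x. real n * \<phi> x) (A ^^ n)"
proof -
  note C = assms(1) and T = assms(3)
  have B1: "pos_linear_op (wop \<phi> A)"
    using pos_linear_op_wop[OF transfer_op_imp_pos_linear_op[OF T] assms(4)] .
  have B2: "pos_linear_op (wop (\<lambda>x. real n * \<phi> x) (A ^^ n))"
    by (intro pos_linear_op_wop pos_linear_op_funpow transfer_op_imp_pos_linear_op[OF T]
        continuous_intros assms(4))
  have "ereal (real n) * log_growth (\<lambda>k. supnorm ((wop \<phi> A ^^ k) (\<lambda>_. 1)))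
      \<le> log_growth (\<lambda>k. supnorm ((wop (\<lambda>x. real n * \<phi> x) (A ^^ n) ^^ k) (\<lambda>_. 1)))"
    by (rule log_growth_compare[OF supnorm_iterate_nonneg[OF C B1] supnorm_iterate_add_le[OF C B1]
          supnorm_iterate_nonneg[OF C B2] supnorm_iterate_add_le[OF C B2] assms(5)
          weighted_iterate_supnorm_le[OF assms]])
  then show ?thesis unfolding lam_def log_growth_def .
qed

end
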